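(* Assume $x(0)=x'(0)=0$ and $y_1(t)\to0$ as $t\to\infty$. Let $L_1(t,s)=\omega\sin(\omega(t-s))+\cos(\omega(t-s))$. Then $x(t)\to0$ as $t\to\infty$ if and only if \[ \lim_{t\to\infty}\int_0^tE(t,s)L_1(t,s)y_1(s)\,ds=0. \]
   Context: Standing assumptions: $\omega>0$ is a constant; $p\in C^1([0,\infty))$ with $p(t)>0$ and $p'(t)<0$ for all $t\ge0$, $\int_0^\infty p(t)\,dt=\infty$ and $\int_0^\infty p(t)^2\,dt<\infty$; $f\in L^1_{\mathrm{loc}}([0,\infty))$. $x$ denotes the solution of $x''(t)+p(t)x'(t)+\omega^2x(t)=f(t)$, $t\ge0$. Notation: $E(t,s)=\exp(-\frac12\int_s^tp(\tau)\,d\tau)$ for $0\le s\le t$; $y_1(t)=\int_0^te^{-\omega^2(t-s)}f(s)\,ds$. *)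

theory Defs
  imports "HOL-Analysis.Analysis"
begin

definition Efun :: "(real \<Rightarrow> real) \<Rightarrow> real \<Rightarrow> real \<Rightarrow> real" where
  "Efun p t s = exp (- (1/2) * (LINT \<tau>:{s..t}|lborel. p \<tau>))"

definition y1fun :: "real \<Rightarrow> (real \<Rightarrow> real) \<Rightarrow> real \<Rightarrow> real" where
  "y1fun \<omega> f t = (LINT s:{0..t}|lborel. exp (- (\<omega>^2) * (t - s)) * f s)"

definition L1fun :: "real \<Rightarrow> real \<Rightarrow> real \<Rightarrow> real" where
  "L1fun \<omega> t s = \<omega> * sin (\<omega> * (t - s)) + cos (\<omega> * (t - s))"

end

theory Submission
  imports Defs
begin

text \<open>
  Let \<open>W t = exp (\<integral>\<^sub>0\<^sup>t p / 2)\<close>, so that \<open>E(t,s) = W s / W t\<close>, let \<open>y = y\<^sub>1\<close> and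
  \<open>q = p\<^sup>2/4 + p'/2\<close>. The pair \<open>(x' - y + p x / 2, \<omega> x)\<close> solves a rotation system damped by
  \<open>p / 2\<close>, and variation of constants gives
  \<open>W t x t = \<integral>\<^sub>0\<^sup>t W s L\<^sub>1(t,s) y s ds + \<omega>\<inverse> \<integral>\<^sub>0\<^sup>t W s sin (\<omega> (t - s)) g s ds\<close>
  with \<open>g = q x - p y / 2\<close>. Hence \<open>x\<close> differs from the integral \<open>J\<close> of the theorem by at most
  \<open>\<omega>\<inverse> (A (|q| |x|) + A (p |y|) / 2)\<close>, where \<open>A k t = (\<integral>\<^sub>0\<^sup>t W k) / W t\<close>.

  Since \<open>W' = p W / 2\<close> and \<open>W \<rightarrow> \<infinity>\<close>, \<open>A (p |y|) \<rightarrow> 0\<close> as \<open>y \<rightarrow> 0\<close>. Since \<open>p\<close> decreases and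
  is square integrable, \<open>p \<rightarrow> 0\<close> and \<open>|q| \<le> p\<^sup>2/4 - p'/2\<close> has vanishing tails
  \<open>\<integral>\<^sub>T\<^sup>\<infinity> |q|\<close>, so \<open>A (|q| |x|) \<rightarrow> 0\<close> whenever \<open>x \<rightarrow> 0\<close>; this gives \<open>J \<rightarrow> 0\<close>.
  Conversely, if \<open>J \<rightarrow> 0\<close> then \<open>|x| \<le> \<delta> + \<omega>\<inverse> A (|q| |x|)\<close> with \<open>\<delta> \<rightarrow> 0\<close>, and the small
  tails of \<open>q\<close> let this Gronwall-type inequality absorb itself: first \<open>x\<close> is bounded, then
  \<open>x \<rightarrow> 0\<close>.
\<close>

lemma at_within_Ici_eq_at_within_atLeastAtMost:
  fixes t b :: real
  assumes "0 \<le> t" "t < b"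
  shows "at t within {0..} = at t within {0..b}"
  by (rule at_within_nhd[where S="{t-1<..<b}"]) (use assms in auto)

lemma continuous_on_IciI:
  fixes f :: "real \<Rightarrow> real"
  assumes "\<And>b. continuous_on {0..b} f"
  shows "continuous_on {0..} f"
  unfolding continuous_on_eq_continuous_within
proof
  fix t :: real assume "t \<in> {0..}"
  then have "continuous (at t within {0..t+1}) f"
    using assms[of "t+1"] by (simp add: continuous_on_eq_continuous_within)
  then show "continuous (at t within {0..}) f"
    using \<open>t \<in> {0..}\<close> at_within_Ici_eq_at_within_atLeastAtMost[of t "t + 1"] by simp
qed

lemma integral_has_real_derivative_Ici:
  fixes h :: "real \<Rightarrow> real"
  assumes "continuous_on {0..} h" "0 \<le> t"
  shows "((\<lambda>u. integral {0..u} h) has_real_derivative h t) (at t within {0..})"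
proof -
  have "((\<lambda>u. integral {0..u} h) has_real_derivative h t) (at t within {0..t+1})"
    using assms by (intro integral_has_real_derivative) (auto intro: continuous_on_subset)
  then show ?thesis
    using assms at_within_Ici_eq_at_within_atLeastAtMost[of t "t + 1"] by simp
qed

lemma has_integral_if_has_real_derivative_Ici:
  fixes F F' :: "real \<Rightarrow> real"
  assumes "\<And>s. 0 \<le> s \<Longrightarrow> (F has_real_derivative F' s) (at s within {0..})" "0 \<le> a" "a \<le> b"
  shows "(F' has_integral F b - F a) {a..b}"
proof (rule fundamental_theorem_of_calculus[OF \<open>a \<le> b\<close>])
  fix s assume "s \<in> {a..b}"
  then have "(F has_real_derivative F' s) (at s within {a..b})"
    using assms by (intro has_field_derivative_subset[OF assms(1)]) auto
  then show "(F has_vector_derivative F' s) (at s within {a..b})"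
    by (simp add: has_real_derivative_iff_has_vector_derivative)
qed

lemma integrable_on_Ici_subinterval:
  fixes h :: "real \<Rightarrow> real"
  assumes "continuous_on {0..} h" "0 \<le> a"
  shows "h integrable_on {a..b}"
  using assms by (intro integrable_continuous_real) (auto intro: continuous_on_subset)

lemma integral_Ici_combine:
  fixes h :: "real \<Rightarrow> real"
  assumes "continuous_on {0..} h" "0 \<le> a" "a \<le> b"
  shows "integral {0..b} h = integral {0..a} h + integral {a..b} h"
  using Henstock_Kurzweil_Integration.integral_combine[OF assms(2,3)
      integrable_on_Ici_subinterval[OF assms(1)]] by simp

lemma integral_Ici_nonneg:
  fixes h :: "real \<Rightarrow> real"
  assumes "continuous_on {0..} h" "0 \<le> a" "\<And>s. 0 \<le> s \<Longrightarrow> 0 \<le> h s"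
  shows "0 \<le> integral {a..b} h"
  using assms by (intro integral_nonneg integrable_on_Ici_subinterval) auto

lemma set_integral_eq_integral_if_continuous:
  fixes h :: "real \<Rightarrow> real"
  assumes "continuous_on {a..b} h"
  shows "(LINT s:{a..b}|lborel. h s) = integral {a..b} h"
  using set_borel_integral_eq_integral(2)[OF borel_integrable_atLeastAtMost'[OF assms]] .

section \<open>Variation of constants for a damped rotation\<close>

context
  fixes W q a b g\<^sub>1 g\<^sub>2 :: "real \<Rightarrow> real" and \<omega> :: real
  assumes W: "\<And>s. 0 \<le> s \<Longrightarrow> (W has_real_derivative q s * W s) (at s within {0..})"
    and a: "\<And>s. 0 \<le> s \<Longrightarrow>
      (a has_real_derivative - q s * a s - \<omega> * b s + g\<^sub>1 s) (at s within {0..})"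
    and b: "\<And>s. 0 \<le> s \<Longrightarrow>
      (b has_real_derivative - q s * b s + \<omega> * a s + g\<^sub>2 s) (at s within {0..})"
begin

text \<open>In the frame rotating with angle \<open>\<omega> s\<close> and scaled by \<open>W\<close> the homogeneous part disappears.\<close>

lemma damped_rotation_frame_has_real_derivative:
  assumes "0 \<le> s"
  shows "((\<lambda>s. W s * (a s * cos (\<omega> * s) + b s * sin (\<omega> * s))) has_real_derivative
      W s * (cos (\<omega> * s) * g\<^sub>1 s + sin (\<omega> * s) * g\<^sub>2 s)) (at s within {0..})"
    and "((\<lambda>s. W s * (b s * cos (\<omega> * s) - a s * sin (\<omega> * s))) has_real_derivative
      W s * (cos (\<omega> * s) * g\<^sub>2 s - sin (\<omega> * s) * g\<^sub>1 s)) (at s within {0..})"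
proof -
  have "((\<lambda>s. W s * (a s * cos (\<omega> * s) + b s * sin (\<omega> * s))) has_real_derivative
      q s * W s * (a s * cos (\<omega> * s) + b s * sin (\<omega> * s))
        + W s * ((- q s * a s - \<omega> * b s + g\<^sub>1 s) * cos (\<omega> * s) + a s * (- sin (\<omega> * s) * \<omega>)
          + ((- q s * b s + \<omega> * a s + g\<^sub>2 s) * sin (\<omega> * s) + b s * (cos (\<omega> * s) * \<omega>))))
      (at s within {0..})"
    by (rule derivative_eq_intros W[OF assms] a[OF assms] b[OF assms] refl | simp)+
  then show "((\<lambda>s. W s * (a s * cos (\<omega> * s) + b s * sin (\<omega> * s))) has_real_derivative
      W s * (cos (\<omega> * s) * g\<^sub>1 s + sin (\<omega> * s) * g\<^sub>2 s)) (at s within {0..})"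
    by (rule DERIV_cong) (simp add: algebra_simps)
  have "((\<lambda>s. W s * (b s * cos (\<omega> * s) - a s * sin (\<omega> * s))) has_real_derivative
      q s * W s * (b s * cos (\<omega> * s) - a s * sin (\<omega> * s))
        + W s * ((- q s * b s + \<omega> * a s + g\<^sub>2 s) * cos (\<omega> * s) + b s * (- sin (\<omega> * s) * \<omega>)
          - ((- q s * a s - \<omega> * b s + g\<^sub>1 s) * sin (\<omega> * s) + a s * (cos (\<omega> * s) * \<omega>))))
      (at s within {0..})"
    by (rule derivative_eq_intros W[OF assms] a[OF assms] b[OF assms] refl | simp)+
  then show "((\<lambda>s. W s * (b s * cos (\<omega> * s) - a s * sin (\<omega> * s))) has_real_derivative
      W s * (cos (\<omega> * s) * g\<^sub>2 s - sin (\<omega> * s) * g\<^sub>1 s)) (at s within {0..})"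
    by (rule DERIV_cong) (simp add: algebra_simps)
qed

lemma damped_rotation_variation_of_constants:
  assumes "a 0 = 0" "b 0 = 0" "0 \<le> t"
  shows "W t * b t =
    integral {0..t} (\<lambda>s. W s * (sin (\<omega> * (t - s)) * g\<^sub>1 s + cos (\<omega> * (t - s)) * g\<^sub>2 s))"
proof -
  define \<alpha> where "\<alpha> s = W s * (a s * cos (\<omega> * s) + b s * sin (\<omega> * s))" for s
  define \<beta> where "\<beta> s = W s * (b s * cos (\<omega> * s) - a s * sin (\<omega> * s))" for s
  have \<alpha>: "((\<lambda>s. W s * (cos (\<omega> * s) * g\<^sub>1 s + sin (\<omega> * s) * g\<^sub>2 s)) has_integral \<alpha> t) {0..t}"
    using has_integral_if_has_real_derivative_Ici[OF damped_rotation_frame_has_real_derivative(1)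
        order_refl \<open>0 \<le> t\<close>] assms by (simp add: \<alpha>_def)
  have \<beta>: "((\<lambda>s. W s * (cos (\<omega> * s) * g\<^sub>2 s - sin (\<omega> * s) * g\<^sub>1 s)) has_integral \<beta> t) {0..t}"
    using has_integral_if_has_real_derivative_Ici[OF damped_rotation_frame_has_real_derivative(2)
        order_refl \<open>0 \<le> t\<close>] assms by (simp add: \<beta>_def)
  have "W t * b t = sin (\<omega> * t) * \<alpha> t + cos (\<omega> * t) * \<beta> t"
    using sin_cos_squared_add[of "\<omega> * t"] unfolding \<alpha>_def \<beta>_def power2_eq_square by algebra
  also have "\<dots> = integral {0..t} (\<lambda>s.
      sin (\<omega> * t) * (W s * (cos (\<omega> * s) * g\<^sub>1 s + sin (\<omega> * s) * g\<^sub>2 s))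
      + cos (\<omega> * t) * (W s * (cos (\<omega> * s) * g\<^sub>2 s - sin (\<omega> * s) * g\<^sub>1 s)))"
    by (intro integral_unique[symmetric] has_integral_add has_integral_mult_right \<alpha> \<beta>)
  also have "\<dots> = integral {0..t}
      (\<lambda>s. W s * (sin (\<omega> * (t - s)) * g\<^sub>1 s + cos (\<omega> * (t - s)) * g\<^sub>2 s))"
    by (simp add: sin_diff cos_diff algebra_simps)
  finally show ?thesis .
qed

end

section \<open>The forcing term \<open>y\<^sub>1\<close>\<close>

lemma set_integrable_exp_mult:
  fixes f :: "real \<Rightarrow> real"
  assumes f: "set_integrable lborel {0..t} f"
  shows "set_integrable lborel {0..t} (\<lambda>s. exp (c * s) * f s)"
proof (rule set_integrable_bound[where f="\<lambda>s. exp (\<bar>c\<bar> * t) * f s"])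
  show "set_integrable lborel {0..t} (\<lambda>s. exp (\<bar>c\<bar> * t) * f s)"
    using f by simp
  have "(\<lambda>s. indicator {0..t} s *\<^sub>R f s) \<in> borel_measurable lborel"
    using f unfolding set_integrable_def by (rule borel_measurable_integrable)
  then show "set_borel_measurable lborel {0..t} (\<lambda>s. exp (c * s) * f s)"
    unfolding set_borel_measurable_def by (simp add: mult.left_commute[of "indicator _ _"])
  have "exp (c * s) \<le> exp (\<bar>c\<bar> * t)" if "s \<in> {0..t}" for s
  proof -
    have "c * s \<le> \<bar>c\<bar> * t"
      using that by (intro order_trans[OF mult_right_mono[OF abs_ge_self] mult_left_mono]) auto
    then show ?thesis by simp
  qed
  then show "AE s in lborel. s \<in> {0..t} \<longrightarrow> norm (exp (c * s) * f s) \<le> norm (exp (\<bar>c\<bar> * t) * f s)"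
    by (auto simp: abs_mult intro!: mult_right_mono)
qed

lemma y1fun_eq_exp_mult_integral:
  fixes f :: "real \<Rightarrow> real"
  assumes "set_integrable lborel {0..t} f"
  shows "y1fun \<omega> f t = exp (- (\<omega>\<^sup>2) * t) * integral {0..t} (\<lambda>s. exp (\<omega>\<^sup>2 * s) * f s)"
proof -
  have "y1fun \<omega> f t = (LINT s:{0..t}|lborel. exp (- (\<omega>\<^sup>2) * t) * (exp (\<omega>\<^sup>2 * s) * f s))"
    unfolding y1fun_def
    by (intro set_lebesgue_integral_cong) (auto simp: algebra_simps simp flip: exp_add)
  then show ?thesis
    using set_borel_integral_eq_integral(2)[OF set_integrable_exp_mult[OF assms]] by simp
qed

lemma
  fixes f :: "real \<Rightarrow> real"
  assumes f: "\<And>t. 0 \<le> t \<Longrightarrow> set_integrable lborel {0..t} f"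
  shows y1fun_0: "y1fun \<omega> f 0 = 0"
    and continuous_on_y1fun: "continuous_on {0..} (y1fun \<omega> f)"
proof -
  show "y1fun \<omega> f 0 = 0"
    using y1fun_eq_exp_mult_integral[OF f[of 0]] by simp
  show "continuous_on {0..} (y1fun \<omega> f)"
  proof (rule continuous_on_IciI)
    fix b :: real
    have "continuous_on {0..b} (\<lambda>t. exp (- (\<omega>\<^sup>2) * t) * integral {0..t} (\<lambda>s. exp (\<omega>\<^sup>2 * s) * f s))"
    proof (cases "0 \<le> b")
      case True
      then show ?thesis
        using set_borel_integral_eq_integral(1)[OF set_integrable_exp_mult[OF f[OF True]]]
        by (intro continuous_intros indefinite_integral_continuous_1)
    qed simp
    then show "continuous_on {0..b} (y1fun \<omega> f)"
      by (rule continuous_on_eq) (simp add: y1fun_eq_exp_mult_integral f)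
  qed
qed

lemma lborel_integral_exp_decay_segment:
  fixes \<omega> s t :: real and \<phi> :: "real \<Rightarrow> real"
  assumes "\<omega> \<noteq> 0" and \<phi>: "t < s \<Longrightarrow> \<phi> s = 0"
  shows "(LINT r|lborel. (if s \<le> r \<and> r \<le> t then exp (- (\<omega>\<^sup>2) * (r - s)) * \<phi> s else 0))
       = \<phi> s * ((1 - exp (- (\<omega>\<^sup>2) * (t - s))) / \<omega>\<^sup>2)"
proof (cases "s \<le> t")
  case True
  have "((\<lambda>r. exp (- (\<omega>\<^sup>2) * (r - s))) has_integral
      (- exp (- (\<omega>\<^sup>2) * (t - s)) / \<omega>\<^sup>2) - (- exp (- (\<omega>\<^sup>2) * (s - s)) / \<omega>\<^sup>2)) {s..t}"
  proof (rule fundamental_theorem_of_calculus[OF True])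
    fix r assume "r \<in> {s..t}"
    show "((\<lambda>r. - exp (- (\<omega>\<^sup>2) * (r - s)) / \<omega>\<^sup>2) has_vector_derivative exp (- (\<omega>\<^sup>2) * (r - s)))
        (at r within {s..t})"
      unfolding has_real_derivative_iff_has_vector_derivative[symmetric]
      using assms by (auto intro!: derivative_eq_intros simp: field_simps)
  qed
  then have "(LINT r:{s..t}|lborel. exp (- (\<omega>\<^sup>2) * (r - s))) = (1 - exp (- (\<omega>\<^sup>2) * (t - s))) / \<omega>\<^sup>2"
    using assms(1) by (simp add: set_integral_eq_integral_if_continuous continuous_intros
        integral_unique field_simps)
  moreover have "(LINT r|lborel. (if s \<le> r \<and> r \<le> t then exp (- (\<omega>\<^sup>2) * (r - s)) * \<phi> s else 0))
      = (LINT r:{s..t}|lborel. exp (- (\<omega>\<^sup>2) * (r - s))) * \<phi> s"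
    unfolding set_lebesgue_integral_def integral_mult_left_zero[symmetric]
    by (rule Bochner_Integration.integral_cong) (auto simp: indicator_def)
  ultimately show ?thesis by simp
next
  case False
  then have "(\<lambda>r. if s \<le> r \<and> r \<le> t then exp (- (\<omega>\<^sup>2) * (r - s)) * \<phi> s else 0) = (\<lambda>r. 0)"
    by auto
  then show ?thesis
    using False \<phi> by simp
qed

lemma integrable_mult_exp_decay:
  fixes g :: "real \<Rightarrow> real"
  assumes g: "integrable lborel g" and g_0: "\<And>s. t < s \<Longrightarrow> g s = 0"
  shows "integrable lborel (\<lambda>s. g s * (1 - exp (- (\<omega>\<^sup>2) * (t - s))))"
proof (rule Bochner_Integration.integrable_bound[OF g])
  have [measurable]: "g \<in> borel_measurable lborel"
    using g by (rule borel_measurable_integrable)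
  show "(\<lambda>s. g s * (1 - exp (- (\<omega>\<^sup>2) * (t - s)))) \<in> borel_measurable lborel"
    by measurable
  have "norm (g s * (1 - exp (- (\<omega>\<^sup>2) * (t - s)))) \<le> norm (g s)" for s
  proof (cases "s \<le> t")
    case True
    then have "exp (- (\<omega>\<^sup>2) * (t - s)) \<le> 1"
      by simp
    then have "\<bar>1 - exp (- (\<omega>\<^sup>2) * (t - s))\<bar> \<le> 1"
      by (simp add: abs_le_iff)
    then show ?thesis
      by (simp add: abs_mult mult_left_le)
  qed (simp add: g_0)
  then show "AE s in lborel. norm (g s * (1 - exp (- (\<omega>\<^sup>2) * (t - s)))) \<le> norm (g s)"
    by simp
qed

lemma integrable_exp_decay_triangle:
  fixes \<phi> :: "real \<Rightarrow> real"
  assumes "\<omega> \<noteq> 0" and \<phi>: "integrable lborel \<phi>" and \<phi>_0: "\<And>s. t < s \<Longrightarrow> \<phi> s = 0"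
  shows "integrable (lborel \<Otimes>\<^sub>M lborel)
    (\<lambda>(s, r). if s \<le> r \<and> r \<le> t then exp (- (\<omega>\<^sup>2) * (r - s)) * \<phi> s else 0)"
proof (rule lborel_pair.Fubini_integrable)
  have [measurable]: "\<phi> \<in> borel_measurable lborel"
    using \<phi> by (rule borel_measurable_integrable)
  show "(\<lambda>(s, r). if s \<le> r \<and> r \<le> t then exp (- (\<omega>\<^sup>2) * (r - s)) * \<phi> s else 0)
      \<in> borel_measurable (lborel \<Otimes>\<^sub>M lborel)"
    by measurable
  have "(LINT r|lborel. norm (if s \<le> r \<and> r \<le> t then exp (- (\<omega>\<^sup>2) * (r - s)) * \<phi> s else 0))
      = (LINT r|lborel. (if s \<le> r \<and> r \<le> t then exp (- (\<omega>\<^sup>2) * (r - s)) * \<bar>\<phi> s\<bar> else 0))" for s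
    by (intro Bochner_Integration.integral_cong) (auto simp: abs_mult)
  also have "\<dots> s = \<bar>\<phi> s\<bar> * (1 - exp (- (\<omega>\<^sup>2) * (t - s))) / \<omega>\<^sup>2" for s
    using lborel_integral_exp_decay_segment[OF \<open>\<omega> \<noteq> 0\<close>, of t s "\<lambda>s. \<bar>\<phi> s\<bar>"] \<phi>_0 by simp
  finally show "integrable lborel (\<lambda>s. LINT r|lborel. norm ((\<lambda>(s, r).
      if s \<le> r \<and> r \<le> t then exp (- (\<omega>\<^sup>2) * (r - s)) * \<phi> s else 0) (s, r)))"
    using integrable_mult_exp_decay[OF integrable_abs[OF \<phi>], of t \<omega>] \<phi>_0 by simp
  have "integrable lborel (\<lambda>r. indicator {s..t} r *\<^sub>R (exp (- (\<omega>\<^sup>2) * (r - s)) * \<phi> s))" for s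
    by (intro borel_integrable_compact continuous_intros) auto
  moreover have "(\<lambda>r. indicator {s..t} r *\<^sub>R (exp (- (\<omega>\<^sup>2) * (r - s)) * \<phi> s))
      = (\<lambda>r. if s \<le> r \<and> r \<le> t then exp (- (\<omega>\<^sup>2) * (r - s)) * \<phi> s else 0)" for s
    by (auto simp: indicator_def)
  ultimately show "AE s in lborel. integrable lborel (\<lambda>r. (\<lambda>(s, r).
      if s \<le> r \<and> r \<le> t then exp (- (\<omega>\<^sup>2) * (r - s)) * \<phi> s else 0) (s, r))"
    by simp
qed

lemma lborel_integral_exp_decay_triangle:
  fixes \<phi> :: "real \<Rightarrow> real"
  assumes "\<omega> \<noteq> 0" and \<phi>: "integrable lborel \<phi>" and \<phi>_0: "\<And>s. t < s \<Longrightarrow> \<phi> s = 0"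
  shows "(LINT r|lborel. LINT s|lborel.
      (if s \<le> r \<and> r \<le> t then exp (- (\<omega>\<^sup>2) * (r - s)) * \<phi> s else 0))
    = (LINT s|lborel. \<phi> s * (1 - exp (- (\<omega>\<^sup>2) * (t - s)))) / \<omega>\<^sup>2"
proof -
  have "(LINT r|lborel. LINT s|lborel.
      (if s \<le> r \<and> r \<le> t then exp (- (\<omega>\<^sup>2) * (r - s)) * \<phi> s else 0))
    = (LINT s|lborel. LINT r|lborel.
      (if s \<le> r \<and> r \<le> t then exp (- (\<omega>\<^sup>2) * (r - s)) * \<phi> s else 0))"
    by (rule lborel_pair.Fubini_integral[OF integrable_exp_decay_triangle[OF assms]])
  also have "\<dots> = (LINT s|lborel. \<phi> s * (1 - exp (- (\<omega>\<^sup>2) * (t - s))) / \<omega>\<^sup>2)"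
    using lborel_integral_exp_decay_segment[OF \<open>\<omega> \<noteq> 0\<close>, of t _ \<phi>] \<phi>_0 by simp
  finally show ?thesis
    by simp
qed

lemma indicator_mult_y1fun_eq:
  fixes f :: "real \<Rightarrow> real"
  shows "indicator {0..t} r * y1fun \<omega> f r = (LINT s|lborel.
    (if s \<le> r \<and> r \<le> t then exp (- (\<omega>\<^sup>2) * (r - s)) * (indicator {0..t} s * f s) else 0))"
proof (cases "0 \<le> r \<and> r \<le> t")
  case True
  then show ?thesis
    unfolding y1fun_def set_lebesgue_integral_def
    by (auto simp: indicator_def intro!: Bochner_Integration.integral_cong)
next
  case False
  then have "(\<lambda>s. if s \<le> r \<and> r \<le> t then exp (- (\<omega>\<^sup>2) * (r - s)) * (indicator {0..t} s * f s) else 0)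
      = (\<lambda>s. 0)"
    by (auto simp: indicator_def)
  then show ?thesis
    using False by simp
qed

text \<open>In integrated form, \<open>y\<^sub>1' = f - \<omega>\<^sup>2 y\<^sub>1\<close>; the double integral is taken over the triangle
  \<open>0 \<le> s \<le> r \<le> t\<close>.\<close>
lemma integral_y1fun:
  fixes f :: "real \<Rightarrow> real"
  assumes "\<omega> \<noteq> 0" and f: "set_integrable lborel {0..t} f"
  shows "\<omega>\<^sup>2 * (LINT r:{0..t}|lborel. y1fun \<omega> f r) = (LINT s:{0..t}|lborel. f s) - y1fun \<omega> f t"
proof -
  define \<phi> where "\<phi> s = indicator {0..t} s * f s" for s
  have \<phi>: "integrable lborel \<phi>"
    using f unfolding set_integrable_def by (simp add: \<phi>_def[abs_def])
  have \<phi>_0: "\<phi> s = 0" if "t < s" for s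
    using that by (simp add: \<phi>_def)
  have "(LINT r:{0..t}|lborel. y1fun \<omega> f r) = (LINT r|lborel. LINT s|lborel.
      (if s \<le> r \<and> r \<le> t then exp (- (\<omega>\<^sup>2) * (r - s)) * \<phi> s else 0))"
    unfolding set_lebesgue_integral_def \<phi>_def using indicator_mult_y1fun_eq[of t _ \<omega> f] by simp
  also have "\<dots> = (LINT s|lborel. \<phi> s * (1 - exp (- (\<omega>\<^sup>2) * (t - s)))) / \<omega>\<^sup>2"
    by (rule lborel_integral_exp_decay_triangle[OF \<open>\<omega> \<noteq> 0\<close> \<phi> \<phi>_0])
  also have "(LINT s|lborel. \<phi> s * (1 - exp (- (\<omega>\<^sup>2) * (t - s))))
      = (LINT s|lborel. \<phi> s) - (LINT s|lborel. \<phi> s * exp (- (\<omega>\<^sup>2) * (t - s)))"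
  proof -
    have "integrable lborel (\<lambda>s. \<phi> s * exp (- (\<omega>\<^sup>2) * (t - s)))"
      using Bochner_Integration.integrable_diff[OF \<phi> integrable_mult_exp_decay[OF \<phi> \<phi>_0]]
      by (simp add: algebra_simps)
    then show ?thesis
      using \<phi> by (simp add: algebra_simps)
  qed
  also have "(LINT s|lborel. \<phi> s) = (LINT s:{0..t}|lborel. f s)"
    by (simp add: \<phi>_def set_lebesgue_integral_def)
  also have "(LINT s|lborel. \<phi> s * exp (- (\<omega>\<^sup>2) * (t - s))) = y1fun \<omega> f t"
    unfolding y1fun_def set_lebesgue_integral_def \<phi>_def
    by (intro Bochner_Integration.integral_cong) auto
  finally show ?thesis
    using \<open>\<omega> \<noteq> 0\<close> by simp
qed

section \<open>Averages against an increasing unbounded weight\<close>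

locale growing_weight =
  fixes W :: "real \<Rightarrow> real"
  assumes continuous_on_W: "continuous_on {0..} W"
    and W_pos: "\<And>t. 0 \<le> t \<Longrightarrow> 0 < W t"
    and W_mono: "\<And>s t. 0 \<le> s \<Longrightarrow> s \<le> t \<Longrightarrow> W s \<le> W t"
    and W_at_top: "filterlim W at_top at_top"
begin

abbreviation weighted_average :: "(real \<Rightarrow> real) \<Rightarrow> real \<Rightarrow> real" where
  "weighted_average k t \<equiv> integral {0..t} (\<lambda>s. W s * k s) / W t"

lemma eventually_const_div_W_less:
  assumes "0 < e"
  shows "eventually (\<lambda>t. K / W t < e) at_top"
proof -
  have "((\<lambda>t. K * inverse (W t)) \<longlongrightarrow> 0) at_top"
    by (intro tendsto_mult_right_zero tendsto_inverse_0_at_top W_at_top)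
  then show ?thesis
    using assms by (auto dest: order_tendstoD(2) simp: divide_inverse)
qed

lemma weighted_average_tendsto_0:
  fixes k :: "real \<Rightarrow> real"
  assumes k: "continuous_on {0..} k" "\<And>s. 0 \<le> s \<Longrightarrow> 0 \<le> k s"
    and tail: "\<And>e. 0 < e \<Longrightarrow>
      eventually (\<lambda>T. \<forall>t\<ge>T. integral {T..t} (\<lambda>s. W s * k s) \<le> e * W t) at_top"
  shows "(weighted_average k \<longlongrightarrow> 0) at_top"
proof (rule tendstoI)
  fix e :: real assume "0 < e"
  have Wk: "continuous_on {0..} (\<lambda>s. W s * k s)"
    by (intro continuous_intros continuous_on_W k)
  obtain T where "0 \<le> T" and T: "\<And>t. T \<le> t \<Longrightarrow> integral {T..t} (\<lambda>s. W s * k s) \<le> e / 2 * W t"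
    using eventually_conj[OF tail[of "e / 2"] eventually_ge_at_top[of 0]] \<open>0 < e\<close>
    by (auto simp: eventually_at_top_linorder)
  define K where "K = integral {0..T} (\<lambda>s. W s * k s)"
  show "eventually (\<lambda>t. dist (integral {0..t} (\<lambda>s. W s * k s) / W t) 0 < e) at_top"
    using eventually_const_div_W_less[OF half_gt_zero[OF \<open>0 < e\<close>], of K]
      eventually_ge_at_top[of T]
  proof eventually_elim
    case (elim t)
    have "0 < W t"
      by (rule W_pos) (use \<open>0 \<le> T\<close> \<open>T \<le> t\<close> in linarith)
    have "integral {0..t} (\<lambda>s. W s * k s) = K + integral {T..t} (\<lambda>s. W s * k s)"
      unfolding K_def by (rule integral_Ici_combine[OF Wk \<open>0 \<le> T\<close> \<open>T \<le> t\<close>])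
    also have "\<dots> \<le> K + e / 2 * W t"
      using T[OF \<open>T \<le> t\<close>] by linarith
    finally have "integral {0..t} (\<lambda>s. W s * k s) / W t \<le> (K + e / 2 * W t) / W t"
      using \<open>0 < W t\<close> by (simp add: divide_right_mono)
    also have "\<dots> = K / W t + e / 2"
      using \<open>0 < W t\<close> by (simp add: add_divide_distrib)
    finally have "integral {0..t} (\<lambda>s. W s * k s) / W t < e"
      using \<open>K / W t < e / 2\<close> by linarith
    moreover have "0 \<le> integral {0..t} (\<lambda>s. W s * k s)"
      using \<open>0 \<le> T\<close> by (intro integral_Ici_nonneg[OF Wk])
        (auto intro!: mult_nonneg_nonneg less_imp_le[OF W_pos] k)
    ultimately show ?case
      using \<open>0 < W t\<close> by (simp add: dist_real_def)
  qed
qed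

context
  fixes c \<theta> :: "real \<Rightarrow> real"
  assumes continuous_on_c: "continuous_on {0..} c"
    and c_nonneg: "\<And>s. 0 \<le> s \<Longrightarrow> 0 \<le> c s"
    and integral_c_le: "\<And>T t. 0 \<le> T \<Longrightarrow> T \<le> t \<Longrightarrow> integral {T..t} c \<le> \<theta> T"
    and \<theta>_tendsto_0: "(\<theta> \<longlongrightarrow> 0) at_top"
begin

lemma integral_W_c_abs_le:
  fixes x :: "real \<Rightarrow> real"
  assumes x: "continuous_on {0..} x" and "0 \<le> T" "T \<le> t"
    and M: "\<And>r. T \<le> r \<Longrightarrow> r \<le> t \<Longrightarrow> \<bar>x r\<bar> \<le> M"
  shows "integral {T..t} (\<lambda>s. W s * (c s * \<bar>x s\<bar>)) \<le> M * \<theta> T * W t"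
proof -
  have "0 \<le> M" using M[of T] \<open>T \<le> t\<close> by auto
  have "integral {T..t} (\<lambda>s. W s * (c s * \<bar>x s\<bar>)) \<le> integral {T..t} (\<lambda>s. M * W t * c s)"
  proof (rule integral_le)
    show "(\<lambda>s. W s * (c s * \<bar>x s\<bar>)) integrable_on {T..t}"
      and "(\<lambda>s. M * W t * c s) integrable_on {T..t}"
      using \<open>0 \<le> T\<close> by (auto intro!: integrable_on_Ici_subinterval continuous_intros
          continuous_on_W continuous_on_c x)
    fix s assume "s \<in> {T..t}"
    then have "W s * (c s * \<bar>x s\<bar>) \<le> W t * (c s * M)"
      using \<open>0 \<le> T\<close> M[of s] W_mono[of s t] W_pos[of s] c_nonneg[of s]
      by (intro mult_mono mult_left_mono) auto
    then show "W s * (c s * \<bar>x s\<bar>) \<le> M * W t * c s" by (simp add: algebra_simps)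
  qed
  also have "\<dots> = M * W t * integral {T..t} c" by simp
  also have "\<dots> \<le> M * W t * \<theta> T"
    using integral_c_le[OF \<open>0 \<le> T\<close> \<open>T \<le> t\<close>] W_pos[of t] \<open>0 \<le> T\<close> \<open>T \<le> t\<close> \<open>0 \<le> M\<close>
    by (intro mult_left_mono) auto
  finally show ?thesis by (simp add: algebra_simps)
qed

lemma weighted_average_c_tendsto_0:
  fixes x :: "real \<Rightarrow> real"
  assumes x: "continuous_on {0..} x" "(x \<longlongrightarrow> 0) at_top"
  shows "(weighted_average (\<lambda>s. c s * \<bar>x s\<bar>) \<longlongrightarrow> 0) at_top"
proof (rule weighted_average_tendsto_0)
  show "continuous_on {0..} (\<lambda>s. c s * \<bar>x s\<bar>)" by (intro continuous_intros continuous_on_c x)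
  show "0 \<le> c s * \<bar>x s\<bar>" if "0 \<le> s" for s using c_nonneg[OF that] by simp
  fix e :: real assume "0 < e"
  have "eventually (\<lambda>r. \<bar>x r\<bar> \<le> e) at_top"
    using order_tendstoD(2)[OF tendsto_rabs_zero[OF x(2)] \<open>0 < e\<close>] by eventually_elim simp
  then have "eventually (\<lambda>T. \<forall>r\<ge>T. \<bar>x r\<bar> \<le> e) at_top"
    by (rule eventually_all_ge_at_top)
  then show "eventually (\<lambda>T. \<forall>t\<ge>T. integral {T..t} (\<lambda>s. W s * (c s * \<bar>x s\<bar>)) \<le> e * W t) at_top"
    using order_tendstoD(2)[OF \<theta>_tendsto_0 zero_less_one] eventually_ge_at_top[of 0]
  proof eventually_elim
    case (elim T)
    show ?case
    proof (intro allI impI)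
      fix t assume "T \<le> t"
      have "integral {T..t} (\<lambda>s. W s * (c s * \<bar>x s\<bar>)) \<le> e * \<theta> T * W t"
        using elim \<open>T \<le> t\<close> by (intro integral_W_c_abs_le x) auto
      also have "\<dots> \<le> e * 1 * W t"
        using elim \<open>0 < e\<close> W_pos[of t] \<open>T \<le> t\<close> by (intro mult_right_mono mult_left_mono) auto
      finally show "integral {T..t} (\<lambda>s. W s * (c s * \<bar>x s\<bar>)) \<le> e * W t" by simp
    qed
  qed
qed

context
  fixes x \<delta> :: "real \<Rightarrow> real" and \<kappa> :: real
  assumes continuous_on_x: "continuous_on {0..} x"
    and \<delta>_tendsto_0: "(\<delta> \<longlongrightarrow> 0) at_top"
    and \<kappa>_nonneg: "0 \<le> \<kappa>"
    and abs_x_le: "\<And>t. 0 \<le> t \<Longrightarrow> \<bar>x t\<bar> \<le> \<delta> t + \<kappa> * weighted_average (\<lambda>s. c s * \<bar>x s\<bar>) t"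
begin

lemma continuous_on_weighted_c_abs: "continuous_on {0..} (\<lambda>s. W s * (c s * \<bar>x s\<bar>))"
  by (intro continuous_intros continuous_on_W continuous_on_c continuous_on_x)

lemma abs_le_weighted_average_split:
  assumes "0 \<le> T" "T \<le> t" and M: "\<And>r. T \<le> r \<Longrightarrow> r \<le> t \<Longrightarrow> \<bar>x r\<bar> \<le> M"
  shows "\<bar>x t\<bar> \<le>
    \<delta> t + \<kappa> * (integral {0..T} (\<lambda>s. W s * (c s * \<bar>x s\<bar>)) / W t) + \<kappa> * M * \<theta> T"
proof -
  have "0 < W t" using W_pos assms by auto
  have "integral {0..t} (\<lambda>s. W s * (c s * \<bar>x s\<bar>))
      = integral {0..T} (\<lambda>s. W s * (c s * \<bar>x s\<bar>)) + integral {T..t} (\<lambda>s. W s * (c s * \<bar>x s\<bar>))"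
    by (rule integral_Ici_combine[OF continuous_on_weighted_c_abs assms(1,2)])
  also have "\<dots> \<le> integral {0..T} (\<lambda>s. W s * (c s * \<bar>x s\<bar>)) + M * \<theta> T * W t"
    using integral_W_c_abs_le[OF continuous_on_x assms] by simp
  finally have "integral {0..t} (\<lambda>s. W s * (c s * \<bar>x s\<bar>)) / W t
      \<le> integral {0..T} (\<lambda>s. W s * (c s * \<bar>x s\<bar>)) / W t + M * \<theta> T"
    using \<open>0 < W t\<close> by (simp add: field_simps)
  then have "\<kappa> * (integral {0..t} (\<lambda>s. W s * (c s * \<bar>x s\<bar>)) / W t)
      \<le> \<kappa> * (integral {0..T} (\<lambda>s. W s * (c s * \<bar>x s\<bar>)) / W t + M * \<theta> T)"
    by (rule mult_left_mono[OF _ \<kappa>_nonneg])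
  then have "\<kappa> * (integral {0..t} (\<lambda>s. W s * (c s * \<bar>x s\<bar>)) / W t)
      \<le> \<kappa> * (integral {0..T} (\<lambda>s. W s * (c s * \<bar>x s\<bar>)) / W t) + \<kappa> * M * \<theta> T"
    by (simp only: distrib_left mult.assoc)
  then show ?thesis
    using abs_x_le[of t] assms(1,2) by linarith
qed

lemma abs_le_at_running_maximum:
  assumes "0 \<le> T" "T < s" "\<kappa> * \<theta> T < 1 / 2" "\<delta> s < 1"
    and max: "\<And>r. T \<le> r \<Longrightarrow> r \<le> s \<Longrightarrow> \<bar>x r\<bar> \<le> \<bar>x s\<bar>"
  shows "\<bar>x s\<bar> \<le> 2 + 2 * (\<kappa> * (integral {0..T} (\<lambda>s. W s * (c s * \<bar>x s\<bar>)) / W T))"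
proof -
  define I where "I = integral {0..T} (\<lambda>s. W s * (c s * \<bar>x s\<bar>))"
  have "\<bar>x s\<bar> \<le> \<delta> s + \<kappa> * (I / W s) + \<kappa> * \<bar>x s\<bar> * \<theta> T"
    unfolding I_def using assms(1,2) max by (intro abs_le_weighted_average_split) simp_all
  moreover have "\<kappa> * (I / W s) \<le> \<kappa> * (I / W T)"
  proof (rule mult_left_mono[OF divide_left_mono \<kappa>_nonneg])
    show "0 \<le> I"
      unfolding I_def using \<open>0 \<le> T\<close>
      by (intro integral_Ici_nonneg[OF continuous_on_weighted_c_abs])
        (auto intro!: mult_nonneg_nonneg less_imp_le[OF W_pos] c_nonneg)
    show "W T \<le> W s" "0 < W s * W T"
      using assms(1,2) W_pos[of T] W_pos[of s] W_mono[of T s] by simp_all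
  qed
  moreover have "\<kappa> * \<bar>x s\<bar> * \<theta> T \<le> \<bar>x s\<bar> / 2"
    using mult_left_mono[OF less_imp_le[OF assms(3)] abs_ge_zero[of "x s"]] by (simp add: mult_ac)
  ultimately show ?thesis
    unfolding I_def using \<open>\<delta> s < 1\<close> by linarith
qed

lemma bounded_if_abs_le_weighted_average: "\<exists>B. \<forall>t\<ge>0. \<bar>x t\<bar> \<le> B"
proof -
  \<comment> \<open>Past a time \<open>T\<close> with \<open>\<kappa> \<theta> T < 1/2\<close>, the maximum of \<open>|x|\<close> on \<open>[0,t]\<close>
    absorbs half of its own bound.\<close>
  have argmax: "\<exists>s\<in>{0..b}. \<forall>r\<in>{0..b}. \<bar>x r\<bar> \<le> \<bar>x s\<bar>" if "0 \<le> b" for b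
    using continuous_attains_sup[of "{0..b}" "\<lambda>r. \<bar>x r\<bar>"] that
      continuous_on_subset[OF continuous_on_rabs[OF continuous_on_x], of "{0..b}"] by auto
  have "eventually (\<lambda>T. \<kappa> * \<theta> T < 1 / 2) at_top"
    by (rule order_tendstoD(2)[OF tendsto_mult_right_zero[OF \<theta>_tendsto_0]]) simp
  moreover have "eventually (\<lambda>T. \<forall>t\<ge>T. \<delta> t < 1) at_top"
    by (rule eventually_all_ge_at_top[OF order_tendstoD(2)[OF \<delta>_tendsto_0]]) simp
  ultimately have "eventually (\<lambda>T. 0 \<le> T \<and> \<kappa> * \<theta> T < 1 / 2 \<and> (\<forall>t\<ge>T. \<delta> t < 1)) at_top"
    using eventually_ge_at_top[of 0] by eventually_elim simp
  then obtain T where T: "\<And>T'. T \<le> T' \<Longrightarrow> 0 \<le> T' \<and> \<kappa> * \<theta> T' < 1 / 2 \<and> (\<forall>t\<ge>T'. \<delta> t < 1)"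
    unfolding eventually_at_top_linorder by blast
  then have "0 \<le> T" "\<kappa> * \<theta> T < 1 / 2" and T\<delta>: "\<And>t. T \<le> t \<Longrightarrow> \<delta> t < 1"
    by auto
  obtain s\<^sub>0 where s\<^sub>0: "\<And>r. r \<in> {0..T} \<Longrightarrow> \<bar>x r\<bar> \<le> \<bar>x s\<^sub>0\<bar>"
    using argmax[OF \<open>0 \<le> T\<close>] by blast
  define K where "K = 2 + 2 * (\<kappa> * (integral {0..T} (\<lambda>s. W s * (c s * \<bar>x s\<bar>)) / W T))"
  have "\<bar>x t\<bar> \<le> max \<bar>x s\<^sub>0\<bar> K" if "0 \<le> t" for t
  proof -
    obtain s where "s \<in> {0..t}" and s: "\<And>r. r \<in> {0..t} \<Longrightarrow> \<bar>x r\<bar> \<le> \<bar>x s\<bar>"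
      using argmax[OF \<open>0 \<le> t\<close>] by blast
    have "\<bar>x s\<bar> \<le> \<bar>x s\<^sub>0\<bar> \<or> \<bar>x s\<bar> \<le> K"
    proof (cases "s \<le> T")
      case True
      then show ?thesis using s\<^sub>0 \<open>s \<in> {0..t}\<close> by simp
    next
      case False
      then show ?thesis
        unfolding K_def using \<open>0 \<le> T\<close> \<open>\<kappa> * \<theta> T < 1 / 2\<close> T\<delta>[of s] \<open>s \<in> {0..t}\<close>
        by (intro disjI2 abs_le_at_running_maximum s) auto
    qed
    moreover have "\<bar>x t\<bar> \<le> \<bar>x s\<bar>"
      using s \<open>0 \<le> t\<close> by simp
    ultimately show ?thesis by linarith
  qed
  then show ?thesis by blast
qed

lemma tendsto_0_if_abs_le_weighted_average: "(x \<longlongrightarrow> 0) at_top"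
proof (rule tendstoI)
  fix e :: real assume "0 < e"
  then have "0 < e / 3" by simp
  obtain B where B: "\<And>t. 0 \<le> t \<Longrightarrow> \<bar>x t\<bar> \<le> B"
    using bounded_if_abs_le_weighted_average by auto
  obtain T where "0 \<le> T" and T: "\<kappa> * B * \<theta> T < e / 3"
    using eventually_conj[OF order_tendstoD(2)[OF
          tendsto_mult_right_zero[OF \<theta>_tendsto_0, of "\<kappa> * B"] \<open>0 < e / 3\<close>]
        eventually_ge_at_top[of 0]]
    by (auto simp: eventually_at_top_linorder)
  show "eventually (\<lambda>t. dist (x t) 0 < e) at_top"
    using order_tendstoD(2)[OF \<delta>_tendsto_0 \<open>0 < e / 3\<close>] eventually_ge_at_top[of T]
      eventually_const_div_W_less[OF \<open>0 < e / 3\<close>,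
        of "\<kappa> * integral {0..T} (\<lambda>s. W s * (c s * \<bar>x s\<bar>))"]
  proof eventually_elim
    case (elim t)
    have "\<bar>x t\<bar> \<le> \<delta> t + \<kappa> * (integral {0..T} (\<lambda>s. W s * (c s * \<bar>x s\<bar>)) / W t)
        + \<kappa> * B * \<theta> T"
      by (rule abs_le_weighted_average_split[OF \<open>0 \<le> T\<close> \<open>T \<le> t\<close>]) (use B \<open>0 \<le> T\<close> in auto)
    moreover have "\<kappa> * (integral {0..T} (\<lambda>s. W s * (c s * \<bar>x s\<bar>)) / W t)
        = \<kappa> * integral {0..T} (\<lambda>s. W s * (c s * \<bar>x s\<bar>)) / W t"
      by simp
    ultimately have "\<bar>x t\<bar> < e" using elim T by linarith
    then show ?case by (simp add: dist_real_def)
  qed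
qed

end

end

end

section \<open>Decreasing square-integrable damping\<close>

locale decreasing_damping =
  fixes p p' :: "real \<Rightarrow> real"
  assumes p_deriv: "\<And>t. t \<ge> 0 \<Longrightarrow> (p has_real_derivative p' t) (at t within {0..})"
    and p'_cont: "continuous_on {0..} p'"
    and p_pos: "\<And>t. t \<ge> 0 \<Longrightarrow> p t > 0"
    and p'_neg: "\<And>t. t \<ge> 0 \<Longrightarrow> p' t < 0"
    and p_int_infinite: "filterlim (\<lambda>t. LINT s:{0..t}|lborel. p s) at_top at_top"
    and p_sq_int: "set_integrable lborel {0..} (\<lambda>t. (p t)^2)"
begin

lemma continuous_on_p: "continuous_on {0..} p"
  by (rule DERIV_continuous_on[OF p_deriv]) simp

lemma integral_p_mono:
  assumes "0 \<le> s" "s \<le> t"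
  shows "integral {0..s} p \<le> integral {0..t} p"
  using integral_Ici_combine[OF continuous_on_p assms]
    integral_Ici_nonneg[OF continuous_on_p \<open>0 \<le> s\<close>, of t] p_pos
  by (simp add: less_imp_le)

definition W :: "real \<Rightarrow> real" where
  "W t = exp (integral {0..t} p / 2)"

lemma W_has_real_derivative:
  assumes "0 \<le> t"
  shows "(W has_real_derivative p t / 2 * W t) (at t within {0..})"
  unfolding W_def[abs_def]
  using assms by (auto intro!: derivative_eq_intros integral_has_real_derivative_Ici continuous_on_p)

lemma W_at_top: "filterlim W at_top at_top"
proof -
  have "eventually (\<lambda>t. (LINT s:{0..t}|lborel. p s) = integral {0..t} p) at_top"
    using eventually_ge_at_top[of 0]
    by eventually_elim (intro set_integral_eq_integral_if_continuous
        continuous_on_subset[OF continuous_on_p], auto)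
  then have "filterlim (\<lambda>t. integral {0..t} p) at_top at_top"
    using filterlim_cong p_int_infinite by fastforce
  then have "filterlim (\<lambda>t. 1 / 2 * integral {0..t} p) at_top at_top"
    by (intro filterlim_tendsto_pos_mult_at_top[OF tendsto_const]) simp_all
  then have "filterlim (\<lambda>t. exp (1 / 2 * integral {0..t} p)) at_top at_top"
    by (rule filterlim_compose[OF exp_at_top])
  then show ?thesis
    by (simp add: W_def[abs_def])
qed

sublocale growing_weight W
proof
  show "continuous_on {0..} W"
    by (rule DERIV_continuous_on[OF W_has_real_derivative]) simp
  show "0 < W t" for t
    by (simp add: W_def)
  show "W s \<le> W t" if "0 \<le> s" "s \<le> t" for s t
    using integral_p_mono[OF that] by (simp add: W_def)
qed (rule W_at_top)

lemma Efun_eq: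
  assumes "0 \<le> s" "s \<le> t"
  shows "Efun p t s = W s / W t"
proof -
  have "(LINT \<tau>:{s..t}|lborel. p \<tau>) = integral {s..t} p"
    using assms
    by (intro set_integral_eq_integral_if_continuous continuous_on_subset[OF continuous_on_p]) auto
  also have "\<dots> = integral {0..t} p - integral {0..s} p"
    using integral_Ici_combine[OF continuous_on_p assms] by simp
  finally show ?thesis
    unfolding Efun_def W_def by (simp add: field_simps flip: exp_diff)
qed

lemma integral_W_p:
  assumes "0 \<le> T" "T \<le> t"
  shows "integral {T..t} (\<lambda>s. W s * p s) = 2 * W t - 2 * W T"
proof -
  have "((\<lambda>s. 2 * W s) has_real_derivative W s * p s) (at s within {0..})" if "0 \<le> s" for s
    using DERIV_cmult[OF W_has_real_derivative[OF that], of 2] by (simp add: mult.commute)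
  from has_integral_if_has_real_derivative_Ici[OF this assms] show ?thesis
    by (simp add: integral_unique)
qed

lemma weighted_average_p_tendsto_0:
  fixes h :: "real \<Rightarrow> real"
  assumes h: "continuous_on {0..} h" "(h \<longlongrightarrow> 0) at_top"
  shows "(weighted_average (\<lambda>s. p s * \<bar>h s\<bar>) \<longlongrightarrow> 0) at_top"
proof (rule weighted_average_tendsto_0)
  show "continuous_on {0..} (\<lambda>s. p s * \<bar>h s\<bar>)" by (intro continuous_intros continuous_on_p h)
  show "0 \<le> p s * \<bar>h s\<bar>" if "0 \<le> s" for s using p_pos[OF that] by simp
  fix e :: real assume "0 < e"
  have "eventually (\<lambda>r. \<bar>h r\<bar> \<le> e / 2) at_top"
    using order_tendstoD(2)[OF tendsto_rabs_zero[OF h(2)], of "e / 2"] \<open>0 < e\<close>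
    by (auto elim: eventually_mono)
  then have "eventually (\<lambda>T. \<forall>r\<ge>T. \<bar>h r\<bar> \<le> e / 2) at_top"
    by (rule eventually_all_ge_at_top)
  then show "eventually (\<lambda>T. \<forall>t\<ge>T. integral {T..t} (\<lambda>s. W s * (p s * \<bar>h s\<bar>)) \<le> e * W t) at_top"
    using eventually_ge_at_top[of 0]
  proof eventually_elim
    case (elim T)
    show ?case
    proof (intro allI impI)
      fix t assume "T \<le> t"
      have "integral {T..t} (\<lambda>s. W s * (p s * \<bar>h s\<bar>)) \<le> integral {T..t} (\<lambda>s. e / 2 * (W s * p s))"
      proof (rule integral_le)
        show "(\<lambda>s. W s * (p s * \<bar>h s\<bar>)) integrable_on {T..t}"
          and "(\<lambda>s. e / 2 * (W s * p s)) integrable_on {T..t}"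
          using elim by (auto intro!: integrable_on_Ici_subinterval continuous_intros
              continuous_on_W continuous_on_p h)
        fix s assume "s \<in> {T..t}"
        then show "W s * (p s * \<bar>h s\<bar>) \<le> e / 2 * (W s * p s)"
          using elim W_pos[of s] p_pos[of s] mult_left_mono[of "\<bar>h s\<bar>" "e / 2" "W s * p s"]
          by (simp add: algebra_simps)
      qed
      also have "\<dots> = e / 2 * (2 * W t - 2 * W T)"
        using integral_W_p[of T t] elim \<open>T \<le> t\<close> by simp
      also have "\<dots> = e * W t - e * W T"
        by (simp add: algebra_simps)
      also have "\<dots> \<le> e * W t"
        using W_pos[of T] elim \<open>0 < e\<close> by simp
      finally show "integral {T..t} (\<lambda>s. W s * (p s * \<bar>h s\<bar>)) \<le> e * W t" .
    qed
  qed
qed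

lemma p_antimono:
  assumes "0 \<le> s" "s \<le> t"
  shows "p t \<le> p s"
proof -
  have "integral {s..t} p' \<le> integral {s..t} (\<lambda>_. 0)"
  proof (rule integral_le)
    show "p' integrable_on {s..t}" by (rule integrable_on_Ici_subinterval[OF p'_cont \<open>0 \<le> s\<close>])
    show "p' r \<le> 0" if "r \<in> {s..t}" for r
      using p'_neg[of r] that \<open>0 \<le> s\<close> by simp
  qed (rule integrable_0)
  then show ?thesis
    using integral_unique[OF has_integral_if_has_real_derivative_Ici[OF p_deriv assms]] by simp
qed

lemma integral_p_sq_tendsto:
  "((\<lambda>t. integral {0..t} (\<lambda>s. (p s)\<^sup>2)) \<longlongrightarrow> (LINT s:{0..}|lborel. (p s)\<^sup>2)) at_top"
proof -
  have "((\<lambda>t. LINT s:{0..t}|lborel. (p s)\<^sup>2) \<longlongrightarrow> (LINT s:{0..}|lborel. (p s)\<^sup>2)) at_top"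
    by (rule tendsto_set_lebesgue_integral_at_top[OF _ p_sq_int]) simp
  moreover have "eventually (\<lambda>t. (LINT s:{0..t}|lborel. (p s)\<^sup>2) = integral {0..t} (\<lambda>s. (p s)\<^sup>2)) at_top"
    using eventually_ge_at_top[of 0]
    by eventually_elim (intro set_integral_eq_integral_if_continuous continuous_intros
        continuous_on_subset[OF continuous_on_p], auto)
  ultimately show ?thesis
    by (rule Lim_transform_eventually)
qed

lemma integral_p_sq_le:
  assumes "0 \<le> t"
  shows "integral {0..t} (\<lambda>s. (p s)\<^sup>2) \<le> (LINT s:{0..}|lborel. (p s)\<^sup>2)"
proof (rule tendsto_lowerbound[OF integral_p_sq_tendsto])
  have p2: "continuous_on {0..} (\<lambda>s. (p s)\<^sup>2)"
    by (intro continuous_intros continuous_on_p)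
  show "eventually (\<lambda>u. integral {0..t} (\<lambda>s. (p s)\<^sup>2) \<le> integral {0..u} (\<lambda>s. (p s)\<^sup>2)) at_top"
    using eventually_ge_at_top[of t]
  proof eventually_elim
    case (elim u)
    then show ?case
      using integral_Ici_combine[OF p2 assms elim] integral_Ici_nonneg[OF p2 assms, of u] by simp
  qed
qed simp

lemma p_tendsto_0: "(p \<longlongrightarrow> 0) at_top"
proof -
  define L where "L = (LINT s:{0..}|lborel. (p s)\<^sup>2)"
  have bound: "T * (p T)\<^sup>2 \<le> L" if "0 \<le> T" for T
  proof -
    have "integral {0..T} (\<lambda>s. (p T)\<^sup>2) \<le> integral {0..T} (\<lambda>s. (p s)\<^sup>2)"
    proof (rule integral_le)
      show "(\<lambda>s. (p s)\<^sup>2) integrable_on {0..T}"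
        by (intro integrable_on_Ici_subinterval continuous_intros continuous_on_p) simp
      show "(p T)\<^sup>2 \<le> (p s)\<^sup>2" if "s \<in> {0..T}" for s
        using that p_antimono[of s T] p_pos[of T] by (intro power_mono) auto
    qed (rule integrable_const_ivl)
    then show ?thesis
      using integral_p_sq_le[OF that] that by (simp add: L_def)
  qed
  have upper: "eventually (\<lambda>T. (p T)\<^sup>2 \<le> L / T) at_top"
    using eventually_gt_at_top[of 0]
  proof eventually_elim
    case (elim T)
    then show ?case using bound[of T] by (simp add: pos_le_divide_eq mult.commute)
  qed
  have L_div: "((\<lambda>T. L / T) \<longlongrightarrow> 0) at_top"
    by (intro tendsto_divide_0[OF tendsto_const] filterlim_at_top_imp_at_infinity filterlim_ident)
  have "((\<lambda>T. (p T)\<^sup>2) \<longlongrightarrow> 0) at_top"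
    by (rule tendsto_sandwich[OF _ upper tendsto_const L_div]) simp
  then have "((\<lambda>T. sqrt ((p T)\<^sup>2)) \<longlongrightarrow> sqrt 0) at_top"
    by (rule tendsto_real_sqrt)
  moreover have "eventually (\<lambda>T. sqrt ((p T)\<^sup>2) = p T) at_top"
    using eventually_ge_at_top[of 0] by eventually_elim (use p_pos in \<open>simp add: less_imp_le\<close>)
  ultimately show ?thesis
    by (simp add: Lim_transform_eventually)
qed

text \<open>The substitution \<open>z = W x\<close> turns \<open>x'' + p x' + \<omega>\<^sup>2 x = f\<close> into
  \<open>z'' + (\<omega>\<^sup>2 - q) z = W f\<close>.\<close>
definition q :: "real \<Rightarrow> real" where
  "q s = (p s)\<^sup>2 / 4 + p' s / 2"

lemma continuous_on_abs_q: "continuous_on {0..} (\<lambda>s. \<bar>q s\<bar>)"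
  unfolding q_def by (intro continuous_intros continuous_on_p p'_cont) auto

definition q_tail :: "real \<Rightarrow> real" where
  "q_tail T = ((LINT s:{0..}|lborel. (p s)\<^sup>2) - integral {0..T} (\<lambda>s. (p s)\<^sup>2)) / 4 + p T / 2"

lemma q_tail_tendsto_0: "(q_tail \<longlongrightarrow> 0) at_top"
proof -
  have "(q_tail \<longlongrightarrow> ((LINT s:{0..}|lborel. (p s)\<^sup>2) - (LINT s:{0..}|lborel. (p s)\<^sup>2)) / 4 + 0 / 2)
      at_top"
    unfolding q_tail_def[abs_def]
    by (intro tendsto_add tendsto_divide tendsto_diff tendsto_const integral_p_sq_tendsto
        p_tendsto_0) simp_all
  then show ?thesis
    by simp
qed

lemma integral_abs_q_le_q_tail:
  assumes "0 \<le> T" "T \<le> t"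
  shows "integral {T..t} (\<lambda>s. \<bar>q s\<bar>) \<le> q_tail T"
proof -
  have p2: "continuous_on {0..} (\<lambda>s. (p s)\<^sup>2)"
    by (intro continuous_intros continuous_on_p)
  \<comment> \<open>\<open>p' < 0\<close>, so \<open>|q| \<le> p\<^sup>2/4 - p'/2\<close>, whose integral telescopes in its second term.\<close>
  have "integral {T..t} (\<lambda>s. \<bar>q s\<bar>) \<le> integral {T..t} (\<lambda>s. (p s)\<^sup>2 / 4 - p' s / 2)"
  proof (rule integral_le)
    show "(\<lambda>s. \<bar>q s\<bar>) integrable_on {T..t}"
      by (rule integrable_on_Ici_subinterval[OF continuous_on_abs_q \<open>0 \<le> T\<close>])
    show "(\<lambda>s. (p s)\<^sup>2 / 4 - p' s / 2) integrable_on {T..t}"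
      using \<open>0 \<le> T\<close> by (auto intro!: integrable_on_Ici_subinterval continuous_intros
          continuous_on_p p'_cont)
    show "\<bar>q s\<bar> \<le> (p s)\<^sup>2 / 4 - p' s / 2" if "s \<in> {T..t}" for s
      using p'_neg[of s] that \<open>0 \<le> T\<close> by (simp add: q_def abs_le_iff)
  qed
  also have "\<dots> = integral {T..t} (\<lambda>s. (p s)\<^sup>2) / 4 - integral {T..t} p' / 2"
    by (subst integral_diff) (auto intro!: integrable_on_Ici_subinterval continuous_intros
        continuous_on_p p'_cont \<open>0 \<le> T\<close>)
  also have "\<dots> = (integral {0..t} (\<lambda>s. (p s)\<^sup>2) - integral {0..T} (\<lambda>s. (p s)\<^sup>2)) / 4
      - (p t - p T) / 2"
    using integral_Ici_combine[OF p2 assms]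
      integral_unique[OF has_integral_if_has_real_derivative_Ici[OF p_deriv assms]] by simp
  also have "\<dots> \<le> q_tail T"
    unfolding q_tail_def using integral_p_sq_le[of t] p_pos[of t] assms by (simp add: field_simps)
  finally show ?thesis .
qed

end

section \<open>The damped oscillator\<close>

locale damped_oscillator = decreasing_damping +
  fixes \<omega> :: real and f x x' :: "real \<Rightarrow> real"
  assumes omega_pos: "\<omega> > 0"
    and f_loc_int: "\<And>t. t \<ge> 0 \<Longrightarrow> set_integrable lborel {0..t} f"
    and x_deriv: "\<And>t. t \<ge> 0 \<Longrightarrow> (x has_real_derivative x' t) (at t within {0..})"
    and x'_cont: "continuous_on {0..} x'"
    and x_eq: "\<And>t. t \<ge> 0 \<Longrightarrow>
        x' t = x' 0 + (LINT s:{0..t}|lborel. f s - p s * x' s - \<omega>^2 * x s)"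
    and x0: "x 0 = 0"
    and x'0: "x' 0 = 0"
    and y1_lim: "((\<lambda>t. y1fun \<omega> f t) \<longlongrightarrow> 0) at_top"
begin

abbreviation y :: "real \<Rightarrow> real" where
  "y \<equiv> y1fun \<omega> f"

definition g :: "real \<Rightarrow> real" where
  "g s = q s * x s - p s / 2 * y s"

definition J :: "real \<Rightarrow> real" where
  "J t = (LINT s:{0..t}|lborel. Efun p t s * L1fun \<omega> t s * y s)"

lemma continuous_on_x: "continuous_on {0..} x"
  by (rule DERIV_continuous_on[OF x_deriv]) simp

lemma continuous_on_y: "continuous_on {0..} y"
  by (rule continuous_on_y1fun[OF f_loc_int])

lemma continuous_on_g: "continuous_on {0..} g"
  unfolding g_def q_def
  by (intro continuous_intros continuous_on_p p'_cont continuous_on_x continuous_on_y) auto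

text \<open>Since \<open>f\<close> is only locally integrable, \<open>x'\<close> need not be differentiable, but \<open>x' - y\<close> is.\<close>
lemma x'_minus_y_eq_integral:
  assumes "0 \<le> t"
  shows "x' t - y t = integral {0..t} (\<lambda>s. \<omega>\<^sup>2 * y s - p s * x' s - \<omega>\<^sup>2 * x s)"
proof -
  have px: "continuous_on {0..t} (\<lambda>s. p s * x' s + \<omega>\<^sup>2 * x s)"
    by (intro continuous_intros continuous_on_subset[OF continuous_on_p]
        continuous_on_subset[OF x'_cont] continuous_on_subset[OF continuous_on_x]) auto
  have "x' t = (LINT s:{0..t}|lborel. f s - (p s * x' s + \<omega>\<^sup>2 * x s))"
    using x_eq[OF assms] x'0 by (simp add: algebra_simps)
  also have "\<dots> = (LINT s:{0..t}|lborel. f s) - integral {0..t} (\<lambda>s. p s * x' s + \<omega>\<^sup>2 * x s)"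
    using set_integral_diff(2)[OF f_loc_int[OF assms] borel_integrable_atLeastAtMost'[OF px]]
      set_integral_eq_integral_if_continuous[OF px] by simp
  also have "(LINT s:{0..t}|lborel. f s) = \<omega>\<^sup>2 * integral {0..t} y + y t"
    using integral_y1fun[OF _ f_loc_int[OF assms], of \<omega>] omega_pos
      set_integral_eq_integral_if_continuous[OF continuous_on_subset[OF continuous_on_y]] by simp
  also have "\<omega>\<^sup>2 * integral {0..t} y + y t - integral {0..t} (\<lambda>s. p s * x' s + \<omega>\<^sup>2 * x s)
      = integral {0..t} (\<lambda>s. \<omega>\<^sup>2 * y s - (p s * x' s + \<omega>\<^sup>2 * x s)) + y t"
  proof -
    have "(\<lambda>s. \<omega>\<^sup>2 * y s) integrable_on {0..t}"
      by (intro integrable_on_Ici_subinterval continuous_intros continuous_on_y) simp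
    moreover have "(\<lambda>s. p s * x' s + \<omega>\<^sup>2 * x s) integrable_on {0..t}"
      by (intro integrable_on_Ici_subinterval continuous_intros continuous_on_p x'_cont
          continuous_on_x) simp
    ultimately show ?thesis
      by (simp add: integral_diff)
  qed
  finally show ?thesis
    by (simp add: diff_diff_eq)
qed

lemma x'_minus_y_has_real_derivative:
  assumes "0 \<le> t"
  shows "((\<lambda>s. x' s - y s) has_real_derivative \<omega>\<^sup>2 * y t - p t * x' t - \<omega>\<^sup>2 * x t)
    (at t within {0..})"
proof (rule has_field_derivative_transform_within[where d=1])
  show "((\<lambda>u. integral {0..u} (\<lambda>s. \<omega>\<^sup>2 * y s - p s * x' s - \<omega>\<^sup>2 * x s)) has_real_derivative
      \<omega>\<^sup>2 * y t - p t * x' t - \<omega>\<^sup>2 * x t) (at t within {0..})"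
    by (intro integral_has_real_derivative_Ici continuous_intros continuous_on_y continuous_on_p
        x'_cont continuous_on_x assms)
qed (use assms x'_minus_y_eq_integral in auto)

lemma W_mult_x_eq:
  assumes "0 \<le> t"
  shows "W t * x t = integral {0..t} (\<lambda>s. W s * L1fun \<omega> t s * y s)
    + integral {0..t} (\<lambda>s. W s * sin (\<omega> * (t - s)) * g s) / \<omega>"
proof -
  \<comment> \<open>\<open>(x' - y + p x / 2, \<omega> x)\<close> solves a damped rotation system forced by \<open>(\<omega>\<^sup>2 y + g, \<omega> y)\<close>.\<close>
  have "W t * (\<omega> * x t) = integral {0..t} (\<lambda>s. W s *
      (sin (\<omega> * (t - s)) * (\<omega>\<^sup>2 * y s + g s) + cos (\<omega> * (t - s)) * (\<omega> * y s)))"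
  proof (rule damped_rotation_variation_of_constants[where a="\<lambda>s. x' s - y s + p s / 2 * x s"])
    show "(W has_real_derivative p s / 2 * W s) (at s within {0..})" if "0 \<le> s" for s
      by (rule W_has_real_derivative[OF that])
    show "((\<lambda>s. x' s - y s + p s / 2 * x s) has_real_derivative
        - (p s / 2) * (x' s - y s + p s / 2 * x s) - \<omega> * (\<omega> * x s) + (\<omega>\<^sup>2 * y s + g s))
        (at s within {0..})" if "0 \<le> s" for s
      by (rule x'_minus_y_has_real_derivative[OF that] derivative_eq_intros p_deriv x_deriv that refl
          | simp)+
        (simp add: g_def q_def field_simps power2_eq_square)
    show "((\<lambda>s. \<omega> * x s) has_real_derivative
        - (p s / 2) * (\<omega> * x s) + \<omega> * (x' s - y s + p s / 2 * x s) + \<omega> * y s)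
        (at s within {0..})" if "0 \<le> s" for s
      by (rule derivative_eq_intros x_deriv that refl | simp)+ (simp add: algebra_simps)
  qed (use assms x0 x'0 y1fun_0[OF f_loc_int] in simp_all)
  also have "\<dots> = \<omega> * integral {0..t} (\<lambda>s. W s * L1fun \<omega> t s * y s)
      + integral {0..t} (\<lambda>s. W s * sin (\<omega> * (t - s)) * g s)"
    by (subst integral_mult_right[symmetric], subst integral_add[symmetric])
      (auto intro!: integrable_on_Ici_subinterval continuous_intros continuous_on_W
        continuous_on_y continuous_on_g intro: integral_cong
        simp: L1fun_def algebra_simps power2_eq_square)
  finally show ?thesis
    using omega_pos by (simp add: field_simps)
qed

lemma J_eq:
  assumes "0 \<le> t"
  shows "J t = integral {0..t} (\<lambda>s. W s * L1fun \<omega> t s * y s) / W t"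
proof -
  have "J t = (LINT s:{0..t}|lborel. W s * L1fun \<omega> t s * y s / W t)"
    unfolding J_def by (rule set_lebesgue_integral_cong) (auto simp: Efun_eq)
  also have "\<dots> = integral {0..t} (\<lambda>s. W s * L1fun \<omega> t s * y s / W t)"
    unfolding L1fun_def using W_pos[OF assms]
    by (intro set_integral_eq_integral_if_continuous continuous_intros
        continuous_on_subset[OF continuous_on_W] continuous_on_subset[OF continuous_on_y]) auto
  finally show ?thesis
    by (simp add: integral_divide)
qed

lemma abs_integral_W_sin_g_le:
  assumes "0 \<le> t"
  shows "\<bar>integral {0..t} (\<lambda>s. W s * sin (\<omega> * (t - s)) * g s)\<bar>
    \<le> integral {0..t} (\<lambda>s. W s * (\<bar>q s\<bar> * \<bar>x s\<bar>)) + integral {0..t} (\<lambda>s. W s * (p s * \<bar>y s\<bar>)) / 2"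
proof -
  have "norm (integral {0..t} (\<lambda>s. W s * sin (\<omega> * (t - s)) * g s))
      \<le> integral {0..t} (\<lambda>s. W s * (\<bar>q s\<bar> * \<bar>x s\<bar>) + W s * (p s * \<bar>y s\<bar>) / 2)"
  proof (rule integral_norm_bound_integral)
    show "(\<lambda>s. W s * sin (\<omega> * (t - s)) * g s) integrable_on {0..t}"
      by (intro integrable_on_Ici_subinterval continuous_intros continuous_on_W continuous_on_g) simp
    show "(\<lambda>s. W s * (\<bar>q s\<bar> * \<bar>x s\<bar>) + W s * (p s * \<bar>y s\<bar>) / 2) integrable_on {0..t}"
      by (intro integrable_on_Ici_subinterval continuous_intros continuous_on_W continuous_on_abs_q
          continuous_on_x continuous_on_p continuous_on_y) simp_all
    fix s assume "s \<in> {0..t}"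
    then have "0 < W s" "0 < p s"
      by (simp_all add: W_pos p_pos)
    have "norm (W s * sin (\<omega> * (t - s)) * g s) \<le> W s * \<bar>g s\<bar>"
      using \<open>0 < W s\<close> by (simp add: abs_mult mult_left_le_one_le mult_le_cancel_left1)
    also have "\<bar>g s\<bar> \<le> \<bar>q s\<bar> * \<bar>x s\<bar> + p s * \<bar>y s\<bar> / 2"
      unfolding g_def using abs_triangle_ineq4[of "q s * x s" "p s / 2 * y s"] \<open>0 < p s\<close>
      by (simp add: abs_mult)
    finally show "norm (W s * sin (\<omega> * (t - s)) * g s)
        \<le> W s * (\<bar>q s\<bar> * \<bar>x s\<bar>) + W s * (p s * \<bar>y s\<bar>) / 2"
      using \<open>0 < W s\<close> by (simp add: algebra_simps mult_left_mono)
  qed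
  also have "\<dots> = integral {0..t} (\<lambda>s. W s * (\<bar>q s\<bar> * \<bar>x s\<bar>))
      + integral {0..t} (\<lambda>s. W s * (p s * \<bar>y s\<bar>)) / 2"
    by (subst integral_add) (auto intro!: integrable_on_Ici_subinterval continuous_intros
        continuous_on_W continuous_on_abs_q continuous_on_x continuous_on_p continuous_on_y)
  finally show ?thesis
    by simp
qed

lemma abs_x_minus_J_le:
  assumes "0 \<le> t"
  shows "\<bar>x t - J t\<bar> \<le> (weighted_average (\<lambda>s. \<bar>q s\<bar> * \<bar>x s\<bar>) t
    + weighted_average (\<lambda>s. p s * \<bar>y s\<bar>) t / 2) / \<omega>"
proof -
  have "0 < W t" by (rule W_pos[OF assms])
  have "x t - J t = integral {0..t} (\<lambda>s. W s * sin (\<omega> * (t - s)) * g s) / (\<omega> * W t)"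
    using W_mult_x_eq[OF assms] J_eq[OF assms] \<open>0 < W t\<close> omega_pos by (simp add: field_simps)
  then have "\<bar>x t - J t\<bar> \<le> (integral {0..t} (\<lambda>s. W s * (\<bar>q s\<bar> * \<bar>x s\<bar>))
      + integral {0..t} (\<lambda>s. W s * (p s * \<bar>y s\<bar>)) / 2) / (\<omega> * W t)"
    using abs_integral_W_sin_g_le[OF assms] omega_pos \<open>0 < W t\<close> by (simp add: divide_right_mono)
  then show ?thesis
    using omega_pos \<open>0 < W t\<close> by (simp add: add_divide_distrib mult_ac)
qed

lemma J_tendsto_0_if_x_tendsto_0:
  assumes "(x \<longlongrightarrow> 0) at_top"
  shows "(J \<longlongrightarrow> 0) at_top"
proof -
  have "((\<lambda>t. \<bar>x t\<bar> + (weighted_average (\<lambda>s. \<bar>q s\<bar> * \<bar>x s\<bar>) t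
      + weighted_average (\<lambda>s. p s * \<bar>y s\<bar>) t / 2) / \<omega>) \<longlongrightarrow> 0 + (0 + 0 / 2) / \<omega>) at_top"
    by (intro tendsto_intros tendsto_rabs_zero assms
        weighted_average_c_tendsto_0[OF continuous_on_abs_q _ integral_abs_q_le_q_tail
          q_tail_tendsto_0 continuous_on_x assms]
        weighted_average_p_tendsto_0[OF continuous_on_y y1_lim]) (use omega_pos in simp_all)
  then have majorant: "((\<lambda>t. \<bar>x t\<bar> + (weighted_average (\<lambda>s. \<bar>q s\<bar> * \<bar>x s\<bar>) t
      + weighted_average (\<lambda>s. p s * \<bar>y s\<bar>) t / 2) / \<omega>) \<longlongrightarrow> 0) at_top"
    by simp
  have "eventually (\<lambda>t. norm (J t) \<le> \<bar>x t\<bar> + (weighted_average (\<lambda>s. \<bar>q s\<bar> * \<bar>x s\<bar>) t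
      + weighted_average (\<lambda>s. p s * \<bar>y s\<bar>) t / 2) / \<omega>) at_top"
    using eventually_ge_at_top[of 0]
  proof eventually_elim
    case (elim t)
    then show ?case
      using abs_x_minus_J_le[OF elim] unfolding real_norm_def by linarith
  qed
  then show ?thesis
    by (rule Lim_null_comparison[OF _ majorant])
qed

lemma x_tendsto_0_if_J_tendsto_0:
  assumes "(J \<longlongrightarrow> 0) at_top"
  shows "(x \<longlongrightarrow> 0) at_top"
proof (rule tendsto_0_if_abs_le_weighted_average[OF continuous_on_abs_q _ integral_abs_q_le_q_tail
      q_tail_tendsto_0 continuous_on_x])
  show "((\<lambda>t. \<bar>J t\<bar> + weighted_average (\<lambda>s. p s * \<bar>y s\<bar>) t / 2 / \<omega>) \<longlongrightarrow> 0) at_top"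
    using tendsto_add[OF tendsto_rabs_zero[OF assms] tendsto_divide[OF tendsto_divide[OF
          weighted_average_p_tendsto_0[OF continuous_on_y y1_lim] tendsto_const[of 2]]
          tendsto_const[of \<omega>]]] omega_pos
    by simp
  show "\<bar>x t\<bar> \<le> \<bar>J t\<bar> + weighted_average (\<lambda>s. p s * \<bar>y s\<bar>) t / 2 / \<omega>
      + 1 / \<omega> * weighted_average (\<lambda>s. \<bar>q s\<bar> * \<bar>x s\<bar>) t" if "0 \<le> t" for t
  proof -
    have "(weighted_average (\<lambda>s. \<bar>q s\<bar> * \<bar>x s\<bar>) t + weighted_average (\<lambda>s. p s * \<bar>y s\<bar>) t / 2) / \<omega>
        = weighted_average (\<lambda>s. p s * \<bar>y s\<bar>) t / 2 / \<omega>
          + 1 / \<omega> * weighted_average (\<lambda>s. \<bar>q s\<bar> * \<bar>x s\<bar>) t"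
      by (simp add: add_divide_distrib)
    then show ?thesis
      using abs_x_minus_J_le[OF that] by linarith
  qed
qed (use omega_pos in simp_all)

end

theorem mainTheorem8:
  fixes \<omega> :: real and p p' f x x' :: "real \<Rightarrow> real"
  assumes omega_pos: "\<omega> > 0"
    and p_deriv: "\<And>t. t \<ge> 0 \<Longrightarrow> (p has_real_derivative p' t) (at t within {0..})"
    and p'_cont: "continuous_on {0..} p'"
    and p_pos: "\<And>t. t \<ge> 0 \<Longrightarrow> p t > 0"
    and p'_neg: "\<And>t. t \<ge> 0 \<Longrightarrow> p' t < 0"
    and p_int_infinite: "filterlim (\<lambda>t. LINT s:{0..t}|lborel. p s) at_top at_top"
    and p_sq_int: "set_integrable lborel {0..} (\<lambda>t. (p t)^2)"
    and f_loc_int: "\<And>t. t \<ge> 0 \<Longrightarrow> set_integrable lborel {0..t} f"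
    and x_deriv: "\<And>t. t \<ge> 0 \<Longrightarrow> (x has_real_derivative x' t) (at t within {0..})"
    and x'_cont: "continuous_on {0..} x'"
    and x_eq: "\<And>t. t \<ge> 0 \<Longrightarrow>
        x' t = x' 0 + (LINT s:{0..t}|lborel. f s - p s * x' s - \<omega>^2 * x s)"
    and x0: "x 0 = 0"
    and x'0: "x' 0 = 0"
    and y1_lim: "((\<lambda>t. y1fun \<omega> f t) \<longlongrightarrow> 0) at_top"
  shows "(x \<longlongrightarrow> 0) at_top \<longleftrightarrow>
    ((\<lambda>t. LINT s:{0..t}|lborel. Efun p t s * L1fun \<omega> t s * y1fun \<omega> f s) \<longlongrightarrow> 0) at_top"
proof -
  interpret damped_oscillator p p' \<omega> f x x'
    by unfold_locales (fact assms)+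
  show ?thesis
    using J_tendsto_0_if_x_tendsto_0 x_tendsto_0_if_J_tendsto_0 unfolding J_def[abs_def] by blast
qed

end
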